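(* Let $G$ be a group given by a presentation $\langle X\mid R\rangle$ in which every $x\in X$ satisfies $x^2=e$ and every relation in $R$ has even length. Let $I=X\setminus\{x\}$ for some $x\in X$, and let $w\in G$ with $w\neq e$. Then $w\in {}^{I}G$ if and only if all reduced expressions of $w$ begin with $x$.
   Context: Every $w\in G$ can be written as a product $x_1^{a_1}\cdots x_r^{a_r}$ with $x_j\in X$, $a_j=\pm1$; the length $l(w)$ is the smallest such $r$, and a reduced expression of $w$ is an expression of $w$ as a product of $l(w)$ elements of $X\cup X^{-1}$. The length of a relation $u=v$ ($u,v$ in the free group $F(X)$) is the length of the word $uv^{-1}$ in $F(X)$. For $I\subseteq X$, ${}^{I}G=\{w\in G: l(yw)>l(w)\ \text{for all } y\in I\}$. *)

theory Defs
  imports "HOL-Algebra.Group"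
begin

text \<open>Words over X union X^-1: a letter is a pair (y, b); (y, True) stands for y,
  (y, False) stands for y^-1.\<close>

type_synonym 'a word = "('a \<times> bool) list"

definition is_word :: "'a set \<Rightarrow> 'a word \<Rightarrow> bool" where
  "is_word X w \<longleftrightarrow> set w \<subseteq> X \<times> UNIV"

inductive free_equiv :: "'a word \<Rightarrow> 'a word \<Rightarrow> bool" where
  fe_refl: "free_equiv u u"
| fe_sym: "free_equiv u v \<Longrightarrow> free_equiv v u"
| fe_trans: "free_equiv u v \<Longrightarrow> free_equiv v w \<Longrightarrow> free_equiv u w"
| fe_cancel: "free_equiv (u @ [(a, b), (a, \<not> b)] @ v) (u @ v)"

definition free_length :: "'a word \<Rightarrow> nat" where
  "free_length w = (LEAST n. \<exists>w'. free_equiv w w' \<and> length w' = n)"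

text \<open>Equality in the group <X | R>, where relators r in R stand for relations r = e.\<close>
inductive pres_equiv :: "'a word set \<Rightarrow> 'a word \<Rightarrow> 'a word \<Rightarrow> bool" for R where
  pe_refl: "pres_equiv R u u"
| pe_sym: "pres_equiv R u v \<Longrightarrow> pres_equiv R v u"
| pe_trans: "pres_equiv R u v \<Longrightarrow> pres_equiv R v w \<Longrightarrow> pres_equiv R u w"
| pe_cancel: "pres_equiv R (u @ [(a, b), (a, \<not> b)] @ v) (u @ v)"
| pe_rel: "r \<in> R \<Longrightarrow> pres_equiv R (u @ r @ v) (u @ v)"

definition eval_word :: "('g, 'm) monoid_scheme \<Rightarrow> ('a \<Rightarrow> 'g) \<Rightarrow> 'a word \<Rightarrow> 'g" where
  "eval_word G f w = foldr (\<lambda>(y, b) acc. (if b then f y else inv\<^bsub>G\<^esub> (f y)) \<otimes>\<^bsub>G\<^esub> acc) w \<one>\<^bsub>G\<^esub>"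

definition presentation :: "('g, 'm) monoid_scheme \<Rightarrow> 'a set \<Rightarrow> 'a word set \<Rightarrow> ('a \<Rightarrow> 'g) \<Rightarrow> bool" where
  "presentation G X R f \<longleftrightarrow> group G \<and> f ` X \<subseteq> carrier G \<and> (\<forall>r\<in>R. is_word X r)
     \<and> (\<forall>g\<in>carrier G. \<exists>w. is_word X w \<and> eval_word G f w = g)
     \<and> (\<forall>u v. is_word X u \<longrightarrow> is_word X v \<longrightarrow> (eval_word G f u = eval_word G f v \<longleftrightarrow> pres_equiv R u v))"

definition len :: "('g, 'm) monoid_scheme \<Rightarrow> 'a set \<Rightarrow> ('a \<Rightarrow> 'g) \<Rightarrow> 'g \<Rightarrow> nat" where
  "len G X f g = (LEAST n. \<exists>w. is_word X w \<and> length w = n \<and> eval_word G f w = g)"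

definition reduced_expr :: "('g, 'm) monoid_scheme \<Rightarrow> 'a set \<Rightarrow> ('a \<Rightarrow> 'g) \<Rightarrow> 'a word \<Rightarrow> 'g \<Rightarrow> bool" where
  "reduced_expr G X f w g \<longleftrightarrow> is_word X w \<and> eval_word G f w = g \<and> length w = len G X f g"

definition min_left :: "('g, 'm) monoid_scheme \<Rightarrow> 'a set \<Rightarrow> ('a \<Rightarrow> 'g) \<Rightarrow> 'a set \<Rightarrow> 'g set" where
  "min_left G X f I = {w \<in> carrier G. \<forall>y\<in>I. len G X f (f y \<otimes>\<^bsub>G\<^esub> w) > len G X f w}"

end

theory Submission
  imports Defs
begin

text \<open>Left multiplication by a generator y changes the length by at most one, since
  y is an involution. As all relations have even length, the parity of the length of an
  expression depends only on the element it represents, so the length changes by exactly one.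
  Hence l(yw) > l(w) fails precisely when l(yw) = l(w) - 1, i.e. when w has a reduced
  expression beginning with y; conversely, deleting the first letter of a reduced expression
  shortens it.\<close>

lemma eval_word_Nil [simp]: "eval_word G f [] = \<one>\<^bsub>G\<^esub>"
  by (simp add: eval_word_def)

lemma eval_word_Cons [simp]:
  "eval_word G f ((y, b) # w) = (if b then f y else inv\<^bsub>G\<^esub> (f y)) \<otimes>\<^bsub>G\<^esub> eval_word G f w"
  by (simp add: eval_word_def)

lemma free_equiv_even_length_iff: "free_equiv u v \<Longrightarrow> even (length u) \<longleftrightarrow> even (length v)"
  by (induction rule: free_equiv.induct) auto

lemma even_length_if_even_free_length:
  assumes "even (free_length r)"
  shows "even (length r)"
proof -
  have "\<exists>r'. free_equiv r r' \<and> length r' = free_length r"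
    unfolding free_length_def by (rule LeastI_ex) (use fe_refl in blast)
  then show ?thesis
    using assms free_equiv_even_length_iff by metis
qed

lemma pres_equiv_even_length_iff:
  assumes "\<forall>r\<in>R. even (free_length r)"
  shows "pres_equiv R u v \<Longrightarrow> even (length u) \<longleftrightarrow> even (length v)"
  by (induction rule: pres_equiv.induct) (use assms even_length_if_even_free_length in auto)

locale presented_group =
  fixes G :: "('g, 'm) monoid_scheme" and X :: "'a set" and R :: "'a word set"
    and f :: "'a \<Rightarrow> 'g"
  assumes presentation: "presentation G X R f"
begin

sublocale group G
  using presentation by (simp add: presentation_def)

lemma generator_closed: "y \<in> X \<Longrightarrow> f y \<in> carrier G"
  using presentation by (auto simp: presentation_def)

lemma eval_word_eq_iff:
  "is_word X u \<Longrightarrow> is_word X v \<Longrightarrow> eval_word G f u = eval_word G f v \<longleftrightarrow> pres_equiv R u v"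
  using presentation by (simp add: presentation_def)

lemma eval_word_closed: "is_word X w \<Longrightarrow> eval_word G f w \<in> carrier G"
  by (induction w) (auto simp: is_word_def generator_closed)

lemma reduced_expr_exists:
  assumes "g \<in> carrier G"
  shows "\<exists>e. reduced_expr G X f e g"
proof -
  have "\<exists>e. is_word X e \<and> length e = len G X f g \<and> eval_word G f e = g"
    unfolding len_def by (rule LeastI_ex) (use assms presentation in \<open>auto simp: presentation_def\<close>)
  then show ?thesis
    by (auto simp: reduced_expr_def)
qed

lemma len_le_length: "is_word X w \<Longrightarrow> len G X f (eval_word G f w) \<le> length w"
  unfolding len_def by (rule Least_le) auto

lemma len_mult_generator_le:
  assumes "y \<in> X" and "g \<in> carrier G"
  shows "len G X f (f y \<otimes>\<^bsub>G\<^esub> g) \<le> Suc (len G X f g)"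
proof -
  obtain e where e: "reduced_expr G X f e g"
    using reduced_expr_exists assms(2) by blast
  then have "is_word X ((y, True) # e)"
    using assms(1) by (auto simp: reduced_expr_def is_word_def)
  from len_le_length[OF this] show ?thesis
    using e by (simp add: reduced_expr_def)
qed

end

locale involutive_presentation = presented_group +
  assumes generator_square_relator: "\<forall>y\<in>X. [(y, True), (y, True)] \<in> R"
begin

lemma generator_mult_self:
  assumes "y \<in> X"
  shows "f y \<otimes>\<^bsub>G\<^esub> f y = \<one>\<^bsub>G\<^esub>"
proof -
  have "pres_equiv R ([] @ [(y, True), (y, True)] @ []) ([] @ [])"
    using assms generator_square_relator pe_rel by blast
  then have "eval_word G f [(y, True), (y, True)] = eval_word G f []"
    using assms by (subst eval_word_eq_iff) (auto simp: is_word_def)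
  then show ?thesis
    using assms generator_closed by simp
qed

lemma inv_generator: "y \<in> X \<Longrightarrow> inv\<^bsub>G\<^esub> (f y) = f y"
  using generator_mult_self generator_closed inv_equality by blast

lemma generator_mult_cancel:
  assumes "y \<in> X" and "g \<in> carrier G"
  shows "f y \<otimes>\<^bsub>G\<^esub> (f y \<otimes>\<^bsub>G\<^esub> g) = g"
  using assms generator_closed by (simp add: m_assoc[symmetric] generator_mult_self)

lemma len_mult_hd_less:
  assumes "reduced_expr G X f e w" and "e \<noteq> []"
  shows "len G X f (f (fst (hd e)) \<otimes>\<^bsub>G\<^esub> w) < len G X f w"
proof -
  obtain y b e' where e: "e = (y, b) # e'"
    using assms(2) by (metis list.exhaust prod.exhaust)
  have y: "y \<in> X" and e': "is_word X e'"
    using assms(1) e by (auto simp: reduced_expr_def is_word_def)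
  have "w = f y \<otimes>\<^bsub>G\<^esub> eval_word G f e'"
    using assms(1) e inv_generator[OF y] by (cases b) (simp_all add: reduced_expr_def)
  then have "f y \<otimes>\<^bsub>G\<^esub> w = eval_word G f e'"
    using generator_mult_cancel[OF y eval_word_closed[OF e']] by simp
  then show ?thesis
    using len_le_length[OF e'] assms(1) e by (simp add: reduced_expr_def)
qed

lemma reduced_expr_Cons_if_len_less:
  assumes y: "y \<in> X" and g: "g \<in> carrier G"
    and less: "len G X f (f y \<otimes>\<^bsub>G\<^esub> g) < len G X f g"
  shows "\<exists>v. reduced_expr G X f ((y, True) # v) g"
proof -
  have yg: "f y \<otimes>\<^bsub>G\<^esub> g \<in> carrier G"
    using y g generator_closed by simp
  have "len G X f g \<le> Suc (len G X f (f y \<otimes>\<^bsub>G\<^esub> g))"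
    using len_mult_generator_le[OF y yg] generator_mult_cancel[OF y g] by simp
  with less have drop: "Suc (len G X f (f y \<otimes>\<^bsub>G\<^esub> g)) = len G X f g"
    by simp
  obtain v where "reduced_expr G X f v (f y \<otimes>\<^bsub>G\<^esub> g)"
    using reduced_expr_exists[OF yg] by blast
  then have "reduced_expr G X f ((y, True) # v) g"
    using y drop generator_mult_cancel[OF y g] by (auto simp: reduced_expr_def is_word_def)
  then show ?thesis ..
qed

end

locale even_presentation = presented_group +
  assumes even_relator: "\<forall>r\<in>R. even (free_length r)"
begin

lemma even_length_eq_if_eval_eq:
  "is_word X u \<Longrightarrow> is_word X v \<Longrightarrow> eval_word G f u = eval_word G f v
    \<Longrightarrow> even (length u) \<longleftrightarrow> even (length v)"
  using eval_word_eq_iff pres_equiv_even_length_iff[OF even_relator] by blast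

lemma even_len_mult_generator_iff:
  assumes "y \<in> X" and "g \<in> carrier G"
  shows "even (len G X f (f y \<otimes>\<^bsub>G\<^esub> g)) \<longleftrightarrow> odd (len G X f g)"
proof -
  have yg: "f y \<otimes>\<^bsub>G\<^esub> g \<in> carrier G"
    using assms generator_closed by simp
  obtain u where u: "reduced_expr G X f u g"
    using reduced_expr_exists[OF assms(2)] by blast
  obtain v where v: "reduced_expr G X f v (f y \<otimes>\<^bsub>G\<^esub> g)"
    using reduced_expr_exists[OF yg] by blast
  have "is_word X ((y, True) # u)"
    using assms(1) u by (auto simp: reduced_expr_def is_word_def)
  from even_length_eq_if_eval_eq[OF this, of v] show ?thesis
    using u v by (simp add: reduced_expr_def)
qed

lemma len_mult_generator_neq:
  "y \<in> X \<Longrightarrow> g \<in> carrier G \<Longrightarrow> len G X f (f y \<otimes>\<^bsub>G\<^esub> g) \<noteq> len G X f g"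
  using even_len_mult_generator_iff by fastforce

end

theorem lemma3p2:
  fixes G :: "('g, 'm) monoid_scheme" and X :: "'a set" and R :: "'a word set"
    and f :: "'a \<Rightarrow> 'g" and x :: 'a and w :: 'g
  assumes "presentation G X R f"
    and "\<forall>y\<in>X. [(y, True), (y, True)] \<in> R"
    and "\<forall>r\<in>R. even (free_length r)"
    and "x \<in> X"
    and "w \<in> carrier G" and "w \<noteq> \<one>\<^bsub>G\<^esub>"
  shows "w \<in> min_left G X f (X - {x}) \<longleftrightarrow>
         (\<forall>e. reduced_expr G X f e w \<longrightarrow> fst (hd e) = x)"
proof -
  interpret involutive_presentation G X R f
    using assms(1,2) by unfold_locales
  interpret even_presentation G X R f
    using assms(1,3) by unfold_locales
  show ?thesis
  proof (intro iffI allI impI)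
    fix e
    assume minimal: "w \<in> min_left G X f (X - {x})" and e: "reduced_expr G X f e w"
    have "e \<noteq> []"
      using e assms(6) by (auto simp: reduced_expr_def)
    then have "fst (hd e) \<in> X"
      using e by (cases e) (auto simp: reduced_expr_def is_word_def)
    moreover have "\<not> len G X f (f (fst (hd e)) \<otimes>\<^bsub>G\<^esub> w) > len G X f w"
      using len_mult_hd_less[OF e \<open>e \<noteq> []\<close>] by simp
    ultimately show "fst (hd e) = x"
      using minimal unfolding min_left_def by blast
  next
    assume hd: "\<forall>e. reduced_expr G X f e w \<longrightarrow> fst (hd e) = x"
    have "len G X f (f y \<otimes>\<^bsub>G\<^esub> w) > len G X f w" if y: "y \<in> X - {x}" for y
    proof (rule ccontr)
      assume "\<not> ?thesis"
      with len_mult_generator_neq[of y w] y assms(5)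
      have "len G X f (f y \<otimes>\<^bsub>G\<^esub> w) < len G X f w"
        by auto
      then obtain v where "reduced_expr G X f ((y, True) # v) w"
        using reduced_expr_Cons_if_len_less y assms(5) by blast
      with hd y show False
        by fastforce
    qed
    then show "w \<in> min_left G X f (X - {x})"
      using assms(5) unfolding min_left_def by blast
  qed
qed

end
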